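(* Let $K\ge2$ and let $p,q\in\mathbb{R}^K$ satisfy $\sum_k p_k=\sum_k q_k=1$ (so that $p,q\in s_\alpha^{-1}(\Delta_{K-1})$ for all $\alpha$ sufficiently close to $1$). Then $\frac{2\alpha}{(1-\alpha)^2K}D_{\mathrm{SKL},\alpha}(p\|q)\to\|p-q\|^2$ as $\alpha\to1$, where $\|\cdot\|$ is the Euclidean norm on $\mathbb{R}^K$.
   Context: $\Delta_{K-1}$ is the probability simplex in $\mathbb{R}^K$. For $\alpha\in\mathbb{R}$, $s_\alpha(v)=(1-\alpha)v+\frac{\alpha}{K}$ componentwise, and $s_\alpha^{-1}(\Delta_{K-1})=\{v\in\mathbb{R}^K: s_\alpha(v)\in\Delta_{K-1}\}$. The smoothed KL divergence is $D_{\mathrm{SKL},\alpha}(p\|q)=\sum_{k=1}^K s_\alpha(p_k)\ln\frac{s_\alpha(p_k)}{s_\alpha(q_k)}$ for $p,q\in s_\alpha^{-1}(\Delta_{K-1})$. *)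

theory Defs
  imports "HOL-Analysis.Analysis"
begin

definition smooth :: "real \<Rightarrow> real ^ 'k \<Rightarrow> real ^ 'k" where
  "smooth \<alpha> v = (\<chi> k. (1 - \<alpha>) * v $ k + \<alpha> / real CARD('k))"

definition DSKL :: "real \<Rightarrow> real ^ 'k \<Rightarrow> real ^ 'k \<Rightarrow> real" where
  "DSKL \<alpha> p q = (\<Sum>k\<in>UNIV. smooth \<alpha> p $ k * ln (smooth \<alpha> p $ k / smooth \<alpha> q $ k))"

end

(* Write t = 1 - alpha and c = 1/K. Then s_alpha(p)_k = c + t (p_k - c), and each summand of
   D_SKL,alpha(p || q) has the second-order expansion
     (c + t u) ln ((c + t u) / (c + t v)) = t (u - v) + t^2 (u - v)^2 / (2 c) + o(t^2),
   obtained from ln (1 + x) = x + x^2 R(x) with R continuous at 0 and R(0) = -1/2.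
   The first-order terms cancel because p and q have the same total mass, so
   D_SKL,alpha(p || q) / t^2 tends to K/2 * ||p - q||^2, and the prefactor 2 alpha / K tends to 2/K. *)
theory Submission
  imports Defs "HOL-Real_Asymp.Real_Asymp"
begin

definition ln1p_remainder :: "real \<Rightarrow> real" where
  "ln1p_remainder x = (if x = 0 then -1/2 else (ln (1 + x) - x) / x\<^sup>2)"

lemma ln_one_plus_eq_remainder: "ln (1 + x) = x + x\<^sup>2 * ln1p_remainder x"
  by (cases "x = 0") (simp_all add: ln1p_remainder_def field_simps)

lemma isCont_ln1p_remainder: "isCont ln1p_remainder 0"
proof -
  have "((\<lambda>x::real. (ln (1 + x) - x) / x\<^sup>2) \<longlongrightarrow> -1/2) (at 0)"
    by real_asymp
  moreover have "\<forall>\<^sub>F x in at 0. (ln (1 + x) - x) / x\<^sup>2 = ln1p_remainder x"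
    by (simp add: eventually_at_filter ln1p_remainder_def)
  ultimately have "(ln1p_remainder \<longlongrightarrow> -1/2) (at 0)"
    by (rule Lim_transform_eventually)
  then show ?thesis
    by (simp add: continuous_at ln1p_remainder_def)
qed

lemma ln_ratio_eq_remainder:
  fixes c t u v :: real
  assumes "c > 0" and "c + t * u > 0" and "c + t * v > 0"
  shows "ln ((c + t * u) / (c + t * v)) = t * u / c - t * v / c
    + (t * u / c)\<^sup>2 * ln1p_remainder (t * u / c) - (t * v / c)\<^sup>2 * ln1p_remainder (t * v / c)"
proof -
  have "1 + t * w / c = (c + t * w) / c" for w
    using assms by (simp add: field_simps)
  then have "ln ((c + t * u) / (c + t * v)) = ln (1 + t * u / c) - ln (1 + t * v / c)"
    using assms by (simp add: ln_div)
  then show ?thesis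
    by (simp add: ln_one_plus_eq_remainder)
qed

lemma tendsto_xlogx_ratio_second_order:
  fixes c u v :: real
  assumes "c > 0"
  shows "((\<lambda>t. ((c + t * u) * ln ((c + t * u) / (c + t * v)) - t * (u - v)) / t\<^sup>2)
           \<longlongrightarrow> (u - v)\<^sup>2 / (2 * c)) (at 0)"
proof -
  let ?R = "ln1p_remainder"
  define G where "G t = u * (u - v) / c
      + (c + t * u) * (u\<^sup>2 * ?R (t * u / c) - v\<^sup>2 * ?R (t * v / c)) / c\<^sup>2" for t
  have R_lim: "((\<lambda>t. ?R (t * w / c)) \<longlongrightarrow> ?R 0) (at 0)" for w
    by (rule isCont_tendsto_compose[OF isCont_ln1p_remainder])
      (use assms in \<open>auto intro!: tendsto_eq_intros\<close>)
  have "(G \<longlongrightarrow> u * (u - v) / c + (c + 0 * u) * (u\<^sup>2 * ?R 0 - v\<^sup>2 * ?R 0) / c\<^sup>2) (at 0)"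
    unfolding G_def by (intro tendsto_intros R_lim) (use assms in auto)
  moreover have "u * (u - v) / c + (c + 0 * u) * (u\<^sup>2 * ?R 0 - v\<^sup>2 * ?R 0) / c\<^sup>2
      = (u - v)\<^sup>2 / (2 * c)"
    using assms by (simp add: ln1p_remainder_def field_simps power2_eq_square)
  ultimately have G_lim: "(G \<longlongrightarrow> (u - v)\<^sup>2 / (2 * c)) (at 0)"
    by simp
  have expansion: "((c + t * u) * (t * u / c - t * v / c + (t * u / c)\<^sup>2 * r - (t * v / c)\<^sup>2 * s)
      - t * (u - v)) / t\<^sup>2 = u * (u - v) / c + (c + t * u) * (u\<^sup>2 * r - v\<^sup>2 * s) / c\<^sup>2"
    if "t \<noteq> 0" for t r s
    using that assms by (simp add: field_simps power2_eq_square)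
  have "((\<lambda>t. c + t * w) \<longlongrightarrow> c) (at 0)" for w
    by (auto intro!: tendsto_eq_intros)
  then have pos: "\<forall>\<^sub>F t in at 0. c + t * w > 0" for w
    using assms by (auto dest: order_tendstoD(1))
  have "\<forall>\<^sub>F t in at (0::real). t \<noteq> 0"
    by (simp add: eventually_at_filter)
  with pos[of u] pos[of v]
  have "\<forall>\<^sub>F t in at 0. G t = ((c + t * u) * ln ((c + t * u) / (c + t * v)) - t * (u - v)) / t\<^sup>2"
  proof eventually_elim
    case (elim t)
    show ?case
      unfolding G_def ln_ratio_eq_remainder[OF assms elim(1,2)]
      using \<open>t \<noteq> 0\<close> by (rule expansion[symmetric])
  qed
  with G_lim show ?thesis
    by (rule Lim_transform_eventually)
qed

lemma smooth_component:
  "smooth \<alpha> (p :: real ^ 'k) $ k = 1 / real CARD('k) + (1 - \<alpha>) * (p $ k - 1 / real CARD('k))"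
  by (simp add: smooth_def field_simps)

lemma tendsto_DSKL_over_square:
  fixes p q :: "real ^ 'k"
  assumes "(\<Sum>k\<in>UNIV. p $ k) = (\<Sum>k\<in>UNIV. q $ k)"
  shows "((\<lambda>\<alpha>. DSKL \<alpha> p q / (1 - \<alpha>)\<^sup>2) \<longlongrightarrow> real CARD('k) / 2 * (norm (p - q))\<^sup>2) (at 1)"
proof -
  define c where "c = 1 / real CARD('k)"
  have c: "c > 0"
    by (simp add: c_def)
  define u where "u k = p $ k - c" for k
  define v where "v k = q $ k - c" for k
  define \<phi> where "\<phi> k t = ((c + t * u k) * ln ((c + t * u k) / (c + t * v k)) - t * (u k - v k)) / t\<^sup>2"
    for k t
  have "(\<Sum>k\<in>UNIV. t * (u k - v k)) = 0" for t
    using assms by (simp add: u_def v_def sum_subtractf flip: sum_distrib_left)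
  then have DSKL_eq: "DSKL \<alpha> p q / (1 - \<alpha>)\<^sup>2 = (\<Sum>k\<in>UNIV. \<phi> k (1 - \<alpha>))" for \<alpha>
    by (simp add: DSKL_def smooth_component \<phi>_def u_def v_def c_def sum_subtractf
        flip: sum_divide_distrib)
  have "filterlim (\<lambda>\<alpha>::real. 1 - \<alpha>) (at 0) (at 1)"
    by (auto simp: filterlim_at eventually_at_filter intro!: tendsto_eq_intros)
  then have "((\<lambda>\<alpha>. \<phi> k (1 - \<alpha>)) \<longlongrightarrow> (u k - v k)\<^sup>2 / (2 * c)) (at 1)" for k
    unfolding \<phi>_def by (rule filterlim_compose[OF tendsto_xlogx_ratio_second_order[OF c]])
  then have "((\<lambda>\<alpha>. \<Sum>k\<in>UNIV. \<phi> k (1 - \<alpha>)) \<longlongrightarrow> (\<Sum>k\<in>UNIV. (u k - v k)\<^sup>2 / (2 * c))) (at 1)"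
    by (rule tendsto_sum)
  moreover have "(\<Sum>k\<in>UNIV. (u k - v k)\<^sup>2 / (2 * c)) = real CARD('k) / 2 * (norm (p - q))\<^sup>2"
    unfolding power2_norm_eq_inner
    by (simp add: inner_vec_def u_def v_def c_def power2_eq_square sum_distrib_left mult_ac)
  ultimately show ?thesis
    by (simp add: DSKL_eq)
qed

theorem theorem2:
  fixes p q :: "real ^ 'k"
  assumes "CARD('k) \<ge> 2"
    and "(\<Sum>k\<in>UNIV. p $ k) = 1"
    and "(\<Sum>k\<in>UNIV. q $ k) = 1"
  shows "((\<lambda>\<alpha>. 2 * \<alpha> / ((1 - \<alpha>)\<^sup>2 * real CARD('k)) * DSKL \<alpha> p q)
           \<longlongrightarrow> (norm (p - q))\<^sup>2) (at 1)"
proof -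
  have "((\<lambda>\<alpha>. 2 * \<alpha> / real CARD('k) * (DSKL \<alpha> p q / (1 - \<alpha>)\<^sup>2))
          \<longlongrightarrow> 2 * 1 / real CARD('k) * (real CARD('k) / 2 * (norm (p - q))\<^sup>2)) (at 1)"
    using assms(2,3)
    by (intro tendsto_intros tendsto_DSKL_over_square) simp_all
  then show ?thesis
    by (simp add: field_simps)
qed

end
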